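(* Let $\gamma\in[0,1)$ and let $\tau=(s_k,a_k,r_k,s_{k+1})_{k=1,\dots,T}$ be a (possibly random) trajectory of finite length $T$ in an MDP, with real rewards $r_k$. Let $Q^\pi:\mathcal S\times\mathcal A\to\mathbb R$ be a fixed function (the action-value function of a policy $\pi$). For $i\in\{1,2\}$ and $k\in\{1,\dots,T\}$ let $$\tilde Q^{(i)}(s_k,a_k)=Q^\pi(s_k,a_k)+\epsilon^{(i)}_k ,$$ where, conditionally on $\tau$, the noise terms are integrable with $\mathbb E[\epsilon^{(i)}_k\mid\tau]=0$, and the family $(\epsilon^{(1)}_k)_k$ is independent of the family $(\epsilon^{(2)}_k)_k$. Set $\tilde Q^{(i)}(s_k,a_k)=0$ for $k>T$. For a fixed $t\in\{1,\dots,T\}$ define recursively, for $i\in\{1,2\}$ and integers $k\ge t$, $h\ge 0$, $$V^{(i)}_{k,h}=\begin{cases} r_k+\gamma V^{(i)}_{k+1,h-1}, & h>0,\\ \tilde Q^{(i)}(s_k,a_k), & h=0,\end{cases}$$ with the convention $r_k=0$ and $V^{(i)}_{k,h}=0$ for $k>T$. Let $h^*_{(i)}\in\arg\max_{h>0}V^{(i)}_{t,h}$ (chosen by any fixed tie-breaking rule, as a function of $(V^{(i)}_{t,h})_h$ only), and, writing $j$ for the index in $\{1,2\}$ different from $i$, set $R^{(i)}_t=V^{(j)}_{t,h^*_{(i)}}$. For $0\le h\le T-t$ define $$Q^\pi_{t,h}=\sum_{l=0}^{h}\gamma^l r_{t+l}+\begin{cases}\gamma^{h+1}Q^\pi(s_{t+h+1},a_{t+h+1}),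 & h<T-t,\\ 0, & h=T-t.\end{cases}$$ Then for each $i\in\{1,2\}$, $$\mathbb E_{\tau,\epsilon}\big[R^{(i)}_t\big]\le \mathbb E_\tau\Big[\max_{0\le h\le T-t}Q^\pi_{t,h}\Big].$$
   Context: This is the "twin back-propagation" estimate: one estimator ($i$) selects the rollout length with maximal value, and the other estimator ($j$) evaluates the return along that rollout. Expectations are assumed finite. *)

theory Defs
  imports "HOL-Probability.Probability"
begin

definition traj_sigma ::
  "'w measure \<Rightarrow> 's measure \<Rightarrow> 'b measure \<Rightarrow> nat \<Rightarrow>
   (nat \<Rightarrow> 'w \<Rightarrow> 's) \<Rightarrow> (nat \<Rightarrow> 'w \<Rightarrow> 'b) \<Rightarrow> (nat \<Rightarrow> 'w \<Rightarrow> real) \<Rightarrow> 'w measure" where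
  "traj_sigma M S A T s a r =
     vimage_algebra (space M)
       (\<lambda>\<omega>. \<lambda>k\<in>{1..T}. (s k \<omega>, a k \<omega>, r k \<omega>, s (Suc k) \<omega>))
       (PiM {1..T} (\<lambda>_. S \<Otimes>\<^sub>M A \<Otimes>\<^sub>M borel \<Otimes>\<^sub>M S))"

definition noise_sigma :: "'w measure \<Rightarrow> nat \<Rightarrow> (nat \<Rightarrow> 'w \<Rightarrow> real) \<Rightarrow> 'w measure" where
  "noise_sigma M T e =
     vimage_algebra (space M) (\<lambda>\<omega>. \<lambda>k\<in>{1..T}. e k \<omega>) (PiM {1..T} (\<lambda>_. borel))"

definition cond_indep :: "'w measure \<Rightarrow> 'w measure \<Rightarrow> 'w measure \<Rightarrow> 'w measure \<Rightarrow> bool" where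
  "cond_indep M F G H \<longleftrightarrow>
     (\<forall>X\<in>sets G. \<forall>Y\<in>sets H. AE \<omega> in M.
        real_cond_exp M F (indicator (X \<inter> Y)) \<omega> =
        real_cond_exp M F (indicator X) \<omega> * real_cond_exp M F (indicator Y) \<omega>)"

text \<open>The recursion V_(k,h): rewards r, noisy estimates qt k = Qtilde(s_k,a_k);
  V_(k,h) = 0 for k > T (convention r_k = 0 and Qtilde = 0 beyond T).\<close>
fun Vrec :: "real \<Rightarrow> nat \<Rightarrow> (nat \<Rightarrow> real) \<Rightarrow> (nat \<Rightarrow> real) \<Rightarrow> nat \<Rightarrow> nat \<Rightarrow> real" where
  "Vrec \<gamma> T r qt k 0 = (if k \<le> T then qt k else 0)"
| "Vrec \<gamma> T r qt k (Suc h) = (if k \<le> T then r k + \<gamma> * Vrec \<gamma> T r qt (Suc k) h else 0)"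

definition Qth :: "real \<Rightarrow> nat \<Rightarrow> (nat \<Rightarrow> real) \<Rightarrow> (nat \<Rightarrow> real) \<Rightarrow> nat \<Rightarrow> nat \<Rightarrow> real" where
  "Qth \<gamma> T r q t h =
     (\<Sum>l=0..h. \<gamma> ^ l * r (t + l)) + (if h < T - t then \<gamma> ^ (h + 1) * q (t + h + 1) else 0)"

end

theory Submission
  imports Defs
begin

(* The recursion is affine in the bootstrap values, so the estimator-j rollout of length h > 0 is
   the noiseless rollout plus gamma^h eps^(j)_(t+h) (no noise once t + h passes the horizon), and the
   noiseless rollout is Q^pi_(t, min(h-1, T-t)), hence at most the maximum on the right-hand side.
   What remains is the noise picked up at the selected length h*_(i): that length is measurable
   with respect to the sigma-algebra generated by the trajectory together with the noise of
   estimator i, and every event of this sigma-algebra is orthogonal to eps^(j)_(t+k). By a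
   pi-lambda argument it suffices to check events C inter D with C generated by the trajectory and
   D by the noise of estimator i, and there conditional independence together with
   E[eps^(j)_(t+k) | trajectory] = 0 gives the orthogonality. *)

lemma Vrec_eq_sum:
  "Vrec \<gamma> T r qt k h = (\<Sum>l<h. if k + l \<le> T then \<gamma> ^ l * r (k + l) else 0)
      + (if k + h \<le> T then \<gamma> ^ h * qt (k + h) else 0)"
proof (induction h arbitrary: k)
  case 0
  then show ?case by simp
next
  case (Suc h)
  show ?case
  proof (cases "k \<le> T")
    case True
    have "Vrec \<gamma> T r qt k (Suc h) = r k + \<gamma> * Vrec \<gamma> T r qt (Suc k) h"
      using True by simp
    also have "\<dots> = r k + \<gamma> * ((\<Sum>l<h. if Suc k + l \<le> T then \<gamma> ^ l * r (Suc k + l) else 0)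
        + (if Suc k + h \<le> T then \<gamma> ^ h * qt (Suc k + h) else 0))"
      by (simp only: Suc.IH)
    also have "\<dots> = (\<Sum>l<Suc h. if k + l \<le> T then \<gamma> ^ l * r (k + l) else 0)
        + (if k + Suc h \<le> T then \<gamma> ^ Suc h * qt (k + Suc h) else 0)"
      unfolding sum.lessThan_Suc_shift using True
      by (simp add: sum_distrib_left distrib_left if_distrib mult.assoc cong: if_cong)
    finally show ?thesis .
  qed simp
qed

lemma Vrec_add_noise:
  "Vrec \<gamma> T r (\<lambda>k. q k + e k) k h
     = Vrec \<gamma> T r q k h + (if k + h \<le> T then \<gamma> ^ h * e (k + h) else 0)"
  unfolding Vrec_eq_sum by (simp add: distrib_left)

(* Rollouts reaching beyond the horizon all coincide with the full return, whence the clamp at T - t. *)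
lemma Vrec_eq_Qth:
  assumes "0 < h" "t \<le> T"
  shows "Vrec \<gamma> T r q t h = Qth \<gamma> T r q t (min (h - 1) (T - t))"
proof (cases "t + h \<le> T")
  case True
  obtain h' where h': "h = Suc h'" using assms by (cases h) auto
  have "(\<Sum>l<h. if t + l \<le> T then \<gamma> ^ l * r (t + l) else 0) = (\<Sum>l<h. \<gamma> ^ l * r (t + l))"
    using True by (intro sum.cong) auto
  moreover have "min (h - 1) (T - t) = h'" "h' < T - t" "{0..h'} = {..<h}"
    using True h' by auto
  ultimately show ?thesis using True unfolding Vrec_eq_sum Qth_def by (simp add: h')
next
  case False
  have "(\<Sum>l<h. if t + l \<le> T then \<gamma> ^ l * r (t + l) else 0)
      = (\<Sum>l<h. if l \<in> {0..T - t} then \<gamma> ^ l * r (t + l) else 0)"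
    using assms by (intro sum.cong) auto
  also have "\<dots> = (\<Sum>l\<in>{..<h} \<inter> {0..T - t}. \<gamma> ^ l * r (t + l))"
    by (simp add: sum.inter_restrict)
  also have "{..<h} \<inter> {0..T - t} = {0..T - t}"
    using False assms by auto
  finally show ?thesis using False assms unfolding Vrec_eq_sum Qth_def by (auto simp: min_def)
qed

lemma Vrec_beyond_horizon:
  "T < k + h \<Longrightarrow> Vrec \<gamma> T r qt k h = Vrec \<gamma> T r qt k (T + 1 - k)"
proof (induction h arbitrary: k)
  case (Suc h)
  show ?case
  proof (cases "k \<le> T")
    case True
    then have "T + 1 - k = Suc (T - k)" by simp
    moreover have "Vrec \<gamma> T r qt (Suc k) h = Vrec \<gamma> T r qt (Suc k) (T + 1 - Suc k)"
      using Suc by simp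
    ultimately show ?thesis using True by simp
  qed simp
qed simp

lemma Vrec_has_argmax:
  assumes "t \<le> T"
  shows "\<exists>h>0. \<forall>h'>0. Vrec \<gamma> T r qt t h' \<le> Vrec \<gamma> T r qt t h"
proof -
  let ?v = "Vrec \<gamma> T r qt t"
  let ?n = "T + 1 - t"
  have "?v ` {1..?n} \<noteq> {}" using assms by auto
  then obtain h where h: "h \<in> {1..?n}" "?v h = Max (?v ` {1..?n})"
    using Max_in[of "?v ` {1..?n}"] by (metis finite_atLeastAtMost finite_imageI imageE)
  have "?v h' \<le> ?v h" if "0 < h'" for h'
  proof (cases "h' \<le> ?n")
    case True
    then show ?thesis unfolding h(2) using that by (intro Max_ge) auto
  next
    case False
    then have "?v h' = ?v ?n" using Vrec_beyond_horizon[of T t h'] by auto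
    also have "\<dots> \<le> ?v h" unfolding h(2) using assms by (intro Max_ge) auto
    finally show ?thesis .
  qed
  then show ?thesis using h(1) by (intro exI[of _ h]) auto
qed

lemma Vrec_noisy_le_Max_Qth:
  assumes "0 < h" "t \<le> T"
  shows "Vrec \<gamma> T r (\<lambda>k. q k + e k) t h
    \<le> Max (Qth \<gamma> T r q t ` {0..T - t}) + (\<Sum>k\<in>{1..T - t}. if h = k then \<gamma> ^ k * e (t + k) else 0)"
proof -
  have "Vrec \<gamma> T r (\<lambda>k. q k + e k) t h
      = Qth \<gamma> T r q t (min (h - 1) (T - t)) + (if t + h \<le> T then \<gamma> ^ h * e (t + h) else 0)"
    using Vrec_add_noise Vrec_eq_Qth[OF assms] by simp
  also have "Qth \<gamma> T r q t (min (h - 1) (T - t)) \<le> Max (Qth \<gamma> T r q t ` {0..T - t})"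
    by (intro Max_ge) auto
  also have "(if t + h \<le> T then \<gamma> ^ h * e (t + h) else 0)
      = (\<Sum>k\<in>{1..T - t}. if h = k then \<gamma> ^ k * e (t + k) else 0)"
    using assms by (auto simp: sum.delta')
  finally show ?thesis by simp
qed

lemma measurable_Vrec:
  assumes "\<And>k. 1 \<le> k \<Longrightarrow> k \<le> T \<Longrightarrow> r k \<in> borel_measurable N"
    and "\<And>k. 1 \<le> k \<Longrightarrow> k \<le> T \<Longrightarrow> qt k \<in> borel_measurable N"
    and "1 \<le> k"
  shows "(\<lambda>\<omega>. Vrec \<gamma> T (\<lambda>k. r k \<omega>) (\<lambda>k. qt k \<omega>) k h) \<in> borel_measurable N"
  using assms(3)
proof (induction h arbitrary: k)
  case 0
  then show ?case using assms by (cases "k \<le> T") auto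
next
  case (Suc h)
  then show ?case using assms by (cases "k \<le> T") auto
qed

lemma subalgebra_vimage_algebra:
  assumes "f \<in> measurable M N"
  shows "subalgebra M (vimage_algebra (space M) f N)"
  unfolding subalgebra_def
proof
  have "f \<in> space M \<rightarrow> space N" using measurable_space[OF assms] by auto
  then show "sets (vimage_algebra (space M) f N) \<subseteq> sets M"
    unfolding sets_vimage_algebra2[OF \<open>f \<in> space M \<rightarrow> space N\<close>]
    using measurable_sets[OF assms] by auto
qed simp

lemma measurable_vimage_algebra_self:
  "f \<in> measurable M N \<Longrightarrow> f \<in> measurable (vimage_algebra (space M) f N) N"
  by (intro measurable_vimage_algebra1) (auto dest: measurable_space)

context
  fixes M :: "'w measure" and S :: "'s measure" and A :: "'b measure"
    and s :: "nat \<Rightarrow> 'w \<Rightarrow> 's" and a :: "nat \<Rightarrow> 'w \<Rightarrow> 'b" and r :: "nat \<Rightarrow> 'w \<Rightarrow> real"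
  assumes s_meas [measurable]: "\<And>k. s k \<in> measurable M S"
    and a_meas [measurable]: "\<And>k. a k \<in> measurable M A"
    and r_meas [measurable]: "\<And>k. r k \<in> borel_measurable M"
begin

private lemma measurable_traj:
  "(\<lambda>\<omega>. \<lambda>k\<in>{1..T}. (s k \<omega>, a k \<omega>, r k \<omega>, s (Suc k) \<omega>))
    \<in> measurable M (PiM {1..T} (\<lambda>_. S \<Otimes>\<^sub>M A \<Otimes>\<^sub>M borel \<Otimes>\<^sub>M S))"
  by measurable

lemma subalgebra_traj_sigma: "subalgebra M (traj_sigma M S A T s a r)"
  unfolding traj_sigma_def by (rule subalgebra_vimage_algebra[OF measurable_traj])

lemma measurable_traj_sigma_reward:
  assumes "k \<in> {1..T}"
  shows "r k \<in> borel_measurable (traj_sigma M S A T s a r)"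
proof -
  note measurable_vimage_algebra_self[OF measurable_traj, measurable]
  have "(\<lambda>\<omega>. fst (snd (snd ((\<lambda>k\<in>{1..T}. (s k \<omega>, a k \<omega>, r k \<omega>, s (Suc k) \<omega>)) k))))
      \<in> borel_measurable (traj_sigma M S A T s a r)"
    unfolding traj_sigma_def using assms by measurable
  then show ?thesis using assms by simp
qed

lemma measurable_traj_sigma_Q:
  assumes [measurable]: "(\<lambda>(x, y). Q x y) \<in> borel_measurable (S \<Otimes>\<^sub>M A)" and "k \<in> {1..T}"
  shows "(\<lambda>\<omega>. Q (s k \<omega>) (a k \<omega>)) \<in> borel_measurable (traj_sigma M S A T s a r)"
proof -
  note measurable_vimage_algebra_self[OF measurable_traj, measurable]
  let ?step = "\<lambda>\<omega>. (\<lambda>k\<in>{1..T}. (s k \<omega>, a k \<omega>, r k \<omega>, s (Suc k) \<omega>)) k"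
  have "(\<lambda>\<omega>. (\<lambda>(x, y). Q x y) (fst (?step \<omega>), fst (snd (?step \<omega>))))
      \<in> borel_measurable (traj_sigma M S A T s a r)"
    unfolding traj_sigma_def using assms by measurable
  then show ?thesis using assms by simp
qed

end

context
  fixes M :: "'w measure" and T :: nat and e :: "nat \<Rightarrow> 'w \<Rightarrow> real"
  assumes e_meas [measurable]: "\<And>k. k \<in> {1..T} \<Longrightarrow> e k \<in> borel_measurable M"
begin

private lemma measurable_noise:
  "(\<lambda>\<omega>. \<lambda>k\<in>{1..T}. e k \<omega>) \<in> measurable M (PiM {1..T} (\<lambda>_. borel))"
  by (rule measurable_restrict) (use e_meas in auto)

lemma subalgebra_noise_sigma: "subalgebra M (noise_sigma M T e)"
  unfolding noise_sigma_def by (rule subalgebra_vimage_algebra[OF measurable_noise])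

lemma measurable_noise_sigma:
  assumes "k \<in> {1..T}"
  shows "e k \<in> borel_measurable (noise_sigma M T e)"
proof -
  note measurable_vimage_algebra_self[OF measurable_noise, measurable]
  have "(\<lambda>\<omega>. (\<lambda>k\<in>{1..T}. e k \<omega>) k) \<in> borel_measurable (noise_sigma M T e)"
    unfolding noise_sigma_def using assms by measurable
  then show ?thesis using assms by simp
qed

end

lemma cond_indep_commute:
  assumes "cond_indep M F G H"
  shows "cond_indep M F H G"
  unfolding cond_indep_def
proof (intro ballI)
  fix X Y assume "X \<in> sets H" "Y \<in> sets G"
  then have "AE \<omega> in M. real_cond_exp M F (indicator (Y \<inter> X)) \<omega> =
      real_cond_exp M F (indicator Y) \<omega> * real_cond_exp M F (indicator X) \<omega>"
    using assms unfolding cond_indep_def by blast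
  then show "AE \<omega> in M. real_cond_exp M F (indicator (X \<inter> Y)) \<omega> =
      real_cond_exp M F (indicator X) \<omega> * real_cond_exp M F (indicator Y) \<omega>"
    by (simp add: Int_commute mult.commute)
qed

definition join_sigma :: "'a measure \<Rightarrow> 'a measure \<Rightarrow> 'a measure" where
  "join_sigma F G = sigma (space F) {C \<inter> D | C D. C \<in> sets F \<and> D \<in> sets G}"

lemma space_join_sigma [simp]: "space (join_sigma F G) = space F"
  unfolding join_sigma_def by (simp add: space_measure_of_conv)

lemma sets_join_sigma:
  "sets (join_sigma F G) = sigma_sets (space F) {C \<inter> D | C D. C \<in> sets F \<and> D \<in> sets G}"
  unfolding join_sigma_def by (rule sets_measure_of) (auto dest: sets.sets_into_space)

lemma Int_in_join_sigma: "C \<in> sets F \<Longrightarrow> D \<in> sets G \<Longrightarrow> C \<inter> D \<in> sets (join_sigma F G)"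
  unfolding sets_join_sigma by (intro sigma_sets.Basic) blast

lemma sets_join_sigma_left:
  assumes "space G = space F"
  shows "sets F \<subseteq> sets (join_sigma F G)"
proof
  fix C assume C: "C \<in> sets F"
  then have "C \<inter> space G \<in> sets (join_sigma F G)"
    by (intro Int_in_join_sigma) auto
  moreover have "C \<inter> space G = C" using sets.sets_into_space[OF C] assms by auto
  ultimately show "C \<in> sets (join_sigma F G)" by simp
qed

lemma sets_join_sigma_right:
  assumes "space G = space F"
  shows "sets G \<subseteq> sets (join_sigma F G)"
proof
  fix D assume D: "D \<in> sets G"
  then have "space F \<inter> D \<in> sets (join_sigma F G)"
    by (intro Int_in_join_sigma) auto
  moreover have "space F \<inter> D = D" using sets.sets_into_space[OF D] assms by auto
  ultimately show "D \<in> sets (join_sigma F G)" by simp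
qed

lemma subalgebra_join_sigma:
  assumes "subalgebra M F" "subalgebra M G"
  shows "subalgebra M (join_sigma F G)"
  unfolding subalgebra_def
proof
  have "{C \<inter> D | C D. C \<in> sets F \<and> D \<in> sets G} \<subseteq> sets M"
    using assms by (auto simp: subalgebra_def)
  then have "sigma_sets (space M) {C \<inter> D | C D. C \<in> sets F \<and> D \<in> sets G} \<subseteq> sets M"
    by (rule sets.sigma_sets_subset)
  then show "sets (join_sigma F G) \<subseteq> sets M"
    using assms(1) unfolding sets_join_sigma subalgebra_def by simp
qed (use assms(1) in \<open>simp add: subalgebra_def\<close>)

lemma measurable_join_sigma_left:
  "space G = space F \<Longrightarrow> f \<in> measurable F N \<Longrightarrow> f \<in> measurable (join_sigma F G) N"
  using measurable_mono[OF order_refl refl sets_join_sigma_left space_join_sigma[symmetric]] by blast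

lemma measurable_join_sigma_right:
  "space G = space F \<Longrightarrow> f \<in> measurable G N \<Longrightarrow> f \<in> measurable (join_sigma F G) N"
  using measurable_mono[OF order_refl refl sets_join_sigma_right] space_join_sigma by (metis subsetD)

lemma measurable_Vrec_join_sigma:
  assumes "space G = space F"
    and "\<And>k. k \<in> {1..T} \<Longrightarrow> r k \<in> borel_measurable F"
    and "\<And>k. k \<in> {1..T} \<Longrightarrow> q k \<in> borel_measurable F"
    and "\<And>k. k \<in> {1..T} \<Longrightarrow> e k \<in> borel_measurable G"
    and "1 \<le> t"
  shows "(\<lambda>\<omega>. Vrec \<gamma> T (\<lambda>k. r k \<omega>) (\<lambda>k. q k \<omega> + e k \<omega>) t)
    \<in> measurable (join_sigma F G) (PiM UNIV (\<lambda>_. borel))"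
proof -
  have "(\<lambda>\<omega>. Vrec \<gamma> T (\<lambda>k. r k \<omega>) (\<lambda>k. q k \<omega> + e k \<omega>) t h) \<in> borel_measurable (join_sigma F G)"
    for h
  proof (rule measurable_Vrec[OF _ _ assms(5)])
    fix k assume "1 \<le> k" "k \<le> T"
    then have k: "k \<in> {1..T}" by simp
    show "r k \<in> borel_measurable (join_sigma F G)"
      using measurable_join_sigma_left[OF assms(1) assms(2)[OF k]] .
    show "(\<lambda>\<omega>. q k \<omega> + e k \<omega>) \<in> borel_measurable (join_sigma F G)"
      using measurable_join_sigma_left[OF assms(1) assms(3)[OF k]]
        measurable_join_sigma_right[OF assms(1) assms(4)[OF k]] by (rule borel_measurable_add)
  qed
  then show ?thesis
    by (rule measurable_PiM_single') simp
qed

lemma measurable_Vrec_join_traj_noise: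
  assumes s_meas: "\<And>k. s k \<in> measurable M S" and a_meas: "\<And>k. a k \<in> measurable M A"
    and r_meas: "\<And>k. r k \<in> borel_measurable M"
    and Q_meas: "(\<lambda>(x, y). Q x y) \<in> borel_measurable (S \<Otimes>\<^sub>M A)"
    and e_meas: "\<And>k. k \<in> {1..T} \<Longrightarrow> e k \<in> borel_measurable M"
    and "1 \<le> t"
  shows "(\<lambda>\<omega>. Vrec \<gamma> T (\<lambda>k. r k \<omega>) (\<lambda>k. Q (s k \<omega>) (a k \<omega>) + e k \<omega>) t)
    \<in> measurable (join_sigma (traj_sigma M S A T s a r) (noise_sigma M T e)) (PiM UNIV (\<lambda>_. borel))"
proof (rule measurable_Vrec_join_sigma[where q = "\<lambda>k \<omega>. Q (s k \<omega>) (a k \<omega>)"])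
  show "space (noise_sigma M T e) = space (traj_sigma M S A T s a r)"
    by (simp add: noise_sigma_def traj_sigma_def)
  fix k assume k: "k \<in> {1..T}"
  show "r k \<in> borel_measurable (traj_sigma M S A T s a r)"
    using s_meas a_meas r_meas k by (rule measurable_traj_sigma_reward)
  show "(\<lambda>\<omega>. Q (s k \<omega>) (a k \<omega>)) \<in> borel_measurable (traj_sigma M S A T s a r)"
    using s_meas a_meas r_meas Q_meas k by (rule measurable_traj_sigma_Q)
  show "e k \<in> borel_measurable (noise_sigma M T e)"
    using e_meas k by (rule measurable_noise_sigma)
qed fact

lemma integrable_bounded_mult:
  fixes f X :: "'a \<Rightarrow> real"
  assumes "integrable M X" "f \<in> borel_measurable M" "AE x in M. \<bar>f x\<bar> \<le> B"
  shows "integrable M (\<lambda>x. f x * X x)"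
proof (rule Bochner_Integration.integrable_bound)
  show "integrable M (\<lambda>x. B * X x)" using assms(1) by simp
  show "AE x in M. norm (f x * X x) \<le> norm (B * X x)"
    using assms(3) by eventually_elim (auto simp: abs_mult intro: mult_right_mono)
qed (use assms borel_measurable_integrable in auto)

lemma integral_indicator_mult_eq_0_sigma_sets:
  fixes X :: "'a \<Rightarrow> real"
  assumes "Int_stable G" "G \<subseteq> sets M"
    and X: "integrable M X" "(\<integral>\<omega>. X \<omega> \<partial>M) = 0"
    and gen: "\<And>C. C \<in> G \<Longrightarrow> (\<integral>\<omega>. indicator C \<omega> * X \<omega> \<partial>M) = 0"
    and "B \<in> sigma_sets (space M) G"
  shows "(\<integral>\<omega>. indicator B \<omega> * X \<omega> \<partial>M) = 0"
proof -
  have sub: "sigma_sets (space M) G \<subseteq> sets M"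
    using assms(2) by (rule sets.sigma_sets_subset)
  have "G \<subseteq> Pow (space M)" using assms(2) sets.sets_into_space by auto
  from assms(1) this assms(6) show ?thesis
  proof (induction rule: sigma_sets_induct_disjoint)
    case (compl C)
    have "C \<in> sets M" using compl(1) sub by auto
    have "(\<integral>\<omega>. indicator (space M - C) \<omega> * X \<omega> \<partial>M) = (\<integral>\<omega>. X \<omega> - indicator C \<omega> * X \<omega> \<partial>M)"
      by (intro Bochner_Integration.integral_cong) (auto simp: indicator_def)
    also have "\<dots> = 0"
      using compl(2) X integrable_mult_indicator[OF \<open>C \<in> sets M\<close> X(1)] by simp
    finally show ?case .
  next
    case (union C)
    have C: "\<And>i. C i \<in> sets M" using union(2) sub by auto
    have partial: "(\<integral>\<omega>. indicator (\<Union>i<n. C i) \<omega> * X \<omega> \<partial>M) = 0" for n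
    proof -
      have ind: "indicator (\<Union>i<n. C i) \<omega> = (\<Sum>i<n. indicator (C i) \<omega> :: real)" for \<omega>
        using union(1) by (intro indicator_UN_disjoint) (auto simp: disjoint_family_on_def)
      have "(\<integral>\<omega>. indicator (\<Union>i<n. C i) \<omega> * X \<omega> \<partial>M)
          = (\<Sum>i<n. \<integral>\<omega>. indicator (C i) \<omega> * X \<omega> \<partial>M)"
        unfolding ind sum_distrib_right
        by (intro Bochner_Integration.integral_sum) (use integrable_mult_indicator[OF C X(1)] in auto)
      then show ?thesis using union(3) by simp
    qed
    have "(\<lambda>n. \<integral>\<omega>. indicator (\<Union>i<n. C i) \<omega> * X \<omega> \<partial>M)
        \<longlonglongrightarrow> (\<integral>\<omega>. indicator (\<Union>i. C i) \<omega> * X \<omega> \<partial>M)"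
    proof (rule integral_dominated_convergence[where w="\<lambda>\<omega>. norm (X \<omega>)"])
      show "AE \<omega> in M. (\<lambda>n. indicator (\<Union>i<n. C i) \<omega> * X \<omega>) \<longlonglongrightarrow> indicator (\<Union>i. C i) \<omega> * X \<omega>"
        by (intro AE_I2 tendsto_mult_right LIMSEQ_indicator_UN)
      show "AE \<omega> in M. norm (indicator (\<Union>i<n. C i) \<omega> * X \<omega>) \<le> norm (X \<omega>)" for n
        by (intro AE_I2) (auto simp: indicator_def)
    qed (use C X(1) in auto)
    then show ?case using partial by (simp add: LIMSEQ_const_iff)
  qed (use gen in auto)
qed

context prob_space
begin

lemma sigma_finite_subalgebra_of_subalgebra:
  "subalgebra M F \<Longrightarrow> sigma_finite_subalgebra M F"
  by (intro finite_measure_subalgebra_is_sigma_finite finite_measure_subalgebra.intro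
      finite_measure_subalgebra_axioms.intro) (auto simp: finite_measure_axioms)

lemma integral_mult_eq_0_if_set_integrals_eq_0:
  fixes X Z :: "'a \<Rightarrow> real"
  assumes H: "subalgebra M H" and X: "integrable M X" "X \<in> borel_measurable H"
    and Z: "Z \<in> borel_measurable M" "AE \<omega> in M. \<bar>Z \<omega>\<bar> \<le> B"
    and Z0: "\<And>E. E \<in> sets H \<Longrightarrow> (\<integral>\<omega>\<in>E. Z \<omega> \<partial>M) = 0"
  shows "(\<integral>\<omega>. X \<omega> * Z \<omega> \<partial>M) = 0"
proof -
  interpret sigma_finite_subalgebra M H using H by (rule sigma_finite_subalgebra_of_subalgebra)
  have "AE \<omega> in M. real_cond_exp M H Z \<omega> = 0"
    by (rule real_cond_exp_charact) (use Z Z0 in \<open>auto intro!: integrable_const_bound[where B=B]\<close>)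
  have "(\<integral>\<omega>. X \<omega> * Z \<omega> \<partial>M) = (\<integral>\<omega>. X \<omega> * real_cond_exp M H Z \<omega> \<partial>M)"
    by (rule real_cond_exp_intg(2)[symmetric])
      (use integrable_bounded_mult[OF X(1) Z] X(2) Z(1) in \<open>auto simp: mult.commute\<close>)
  also have "\<dots> = (\<integral>\<omega>. 0 \<partial>M)"
    by (rule integral_cong_AE) (use \<open>AE \<omega> in M. real_cond_exp M H Z \<omega> = 0\<close> X(1) in auto)
  finally show ?thesis by simp
qed

(* With psi = 1_C E[1_D | F], conditional independence makes 1_(C inter D) - psi orthogonal to every
   H-measurable X, while psi X has mean E[psi E[X | F]] = 0. *)
lemma integral_indicator_Int_mult_eq_0:
  fixes X :: "'a \<Rightarrow> real"
  assumes ci: "cond_indep M F G H"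
    and sub: "subalgebra M F" "subalgebra M G" "subalgebra M H"
    and X: "integrable M X" "X \<in> borel_measurable H" "AE \<omega> in M. real_cond_exp M F X \<omega> = 0"
    and C: "C \<in> sets F" and D: "D \<in> sets G"
  shows "(\<integral>\<omega>. indicator (C \<inter> D) \<omega> * X \<omega> \<partial>M) = 0"
proof -
  interpret F: sigma_finite_subalgebra M F
    using sub(1) by (rule sigma_finite_subalgebra_of_subalgebra)
  have CM: "C \<in> sets M" and DM: "D \<in> sets M" using C D sub by (auto simp: subalgebra_def)
  have [measurable]: "X \<in> borel_measurable M" using X(1) by simp
  note [measurable] = C CM DM
  have int_ind: "integrable M (indicator A :: 'a \<Rightarrow> real)" if "A \<in> sets M" for A
    using that by (intro integrable_const_bound[where B=1]) auto
  define \<psi> where "\<psi> = (\<lambda>\<omega>. indicator C \<omega> * real_cond_exp M F (indicator D) \<omega>)"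
  have [measurable]: "\<psi> \<in> borel_measurable F" "\<psi> \<in> borel_measurable M"
    unfolding \<psi>_def by measurable
  have \<psi>_int: "integrable M \<psi>"
    unfolding \<psi>_def using integrable_mult_indicator[OF CM F.real_cond_exp_int(1)[OF int_ind[OF DM]]]
    by simp
  have \<psi>_bound: "AE \<omega> in M. \<bar>\<psi> \<omega>\<bar> \<le> 1"
  proof -
    have "AE \<omega> in M. 0 \<le> real_cond_exp M F (indicator D) \<omega>"
      by (rule F.real_cond_exp_ge_c[OF int_ind[OF DM]]) auto
    moreover have "AE \<omega> in M. real_cond_exp M F (indicator D) \<omega> \<le> 1"
      by (rule F.real_cond_exp_le_c[OF int_ind[OF DM]]) (auto simp: indicator_def)
    ultimately show ?thesis by eventually_elim (auto simp: \<psi>_def indicator_def)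
  qed
  have \<psi>E_int: "integrable M (\<lambda>\<omega>. \<psi> \<omega> * indicator E \<omega>)" if "E \<in> sets M" for E
    using integrable_real_mult_indicator[OF that \<psi>_int] .
  have indep: "(\<integral>\<omega>. indicator (C \<inter> D) \<omega> * indicator E \<omega> \<partial>M) = (\<integral>\<omega>. \<psi> \<omega> * indicator E \<omega> \<partial>M)"
    if E: "E \<in> sets H" for E
  proof -
    have EM [measurable]: "E \<in> sets M" using E sub(3) by (auto simp: subalgebra_def)
    have "(\<integral>\<omega>. indicator (C \<inter> D) \<omega> * indicator E \<omega> \<partial>M)
        = (\<integral>\<omega>. indicator C \<omega> * indicator (D \<inter> E) \<omega> \<partial>M :: real)"
      by (intro Bochner_Integration.integral_cong) (auto split: split_indicator)
    also have "\<dots> = (\<integral>\<omega>. indicator C \<omega> * real_cond_exp M F (indicator (D \<inter> E)) \<omega> \<partial>M)"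
      by (rule F.real_cond_exp_intg(2)[symmetric])
        (auto intro!: integrable_const_bound[where B=1] simp: indicator_def)
    also have "\<dots> = (\<integral>\<omega>. \<psi> \<omega> * real_cond_exp M F (indicator E) \<omega> \<partial>M)"
      using ci D E unfolding cond_indep_def \<psi>_def
      by (intro integral_cong_AE) (auto elim!: eventually_mono)
    also have "\<dots> = (\<integral>\<omega>. \<psi> \<omega> * indicator E \<omega> \<partial>M)"
      by (rule F.real_cond_exp_intg(2)) (auto intro: \<psi>E_int)
    finally show ?thesis .
  qed
  define Z where "Z = (\<lambda>\<omega>. indicator (C \<inter> D) \<omega> - \<psi> \<omega>)"
  have [measurable]: "Z \<in> borel_measurable M" unfolding Z_def by measurable
  have Z_bound: "AE \<omega> in M. \<bar>Z \<omega>\<bar> \<le> 2"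
    using \<psi>_bound by eventually_elim (auto simp: Z_def indicator_def)
  have "(\<integral>\<omega>. X \<omega> * Z \<omega> \<partial>M) = 0"
  proof (rule integral_mult_eq_0_if_set_integrals_eq_0[OF sub(3) X(1,2) _ Z_bound])
    fix E assume E: "E \<in> sets H"
    then have EM: "E \<in> sets M" using sub(3) by (auto simp: subalgebra_def)
    have "(\<integral>\<omega>\<in>E. Z \<omega> \<partial>M)
        = (\<integral>\<omega>. indicator (C \<inter> D) \<omega> * indicator E \<omega> - \<psi> \<omega> * indicator E \<omega> \<partial>M)"
      unfolding set_lebesgue_integral_def Z_def
      by (intro Bochner_Integration.integral_cong) (auto simp: algebra_simps)
    also have "\<dots> = 0"
      using indep[OF E] \<psi>E_int[OF EM] EM CM DM
      by (subst Bochner_Integration.integral_diff)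
        (auto intro!: integrable_const_bound[where B=1] simp: indicator_def)
    finally show "(\<integral>\<omega>\<in>E. Z \<omega> \<partial>M) = 0" .
  qed simp
  moreover have "(\<integral>\<omega>. \<psi> \<omega> * X \<omega> \<partial>M) = 0"
  proof -
    have "(\<integral>\<omega>. \<psi> \<omega> * X \<omega> \<partial>M) = (\<integral>\<omega>. \<psi> \<omega> * real_cond_exp M F X \<omega> \<partial>M)"
      by (rule F.real_cond_exp_intg(2)[symmetric])
        (use integrable_bounded_mult[OF X(1) _ \<psi>_bound] in auto)
    also have "\<dots> = (\<integral>\<omega>. 0 \<partial>M)"
      by (rule integral_cong_AE) (use X(3) in auto)
    finally show ?thesis by simp
  qed
  moreover have "(\<integral>\<omega>. indicator (C \<inter> D) \<omega> * X \<omega> \<partial>M)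
      = (\<integral>\<omega>. X \<omega> * Z \<omega> \<partial>M) + (\<integral>\<omega>. \<psi> \<omega> * X \<omega> \<partial>M)"
    using integrable_bounded_mult[OF X(1) _ Z_bound] integrable_bounded_mult[OF X(1) _ \<psi>_bound]
    by (subst Bochner_Integration.integral_add[symmetric])
      (auto intro!: Bochner_Integration.integral_cong simp: Z_def algebra_simps)
  ultimately show ?thesis by simp
qed

lemma integral_indicator_mult_eq_0_join_sigma:
  fixes X :: "'a \<Rightarrow> real"
  assumes ci: "cond_indep M F G H"
    and sub: "subalgebra M F" "subalgebra M G" "subalgebra M H"
    and X: "integrable M X" "X \<in> borel_measurable H" "AE \<omega> in M. real_cond_exp M F X \<omega> = 0"
    and B: "B \<in> sets (join_sigma F G)"
  shows "(\<integral>\<omega>. indicator B \<omega> * X \<omega> \<partial>M) = 0"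
proof -
  interpret F: sigma_finite_subalgebra M F
    using sub(1) by (rule sigma_finite_subalgebra_of_subalgebra)
  let ?G = "{C \<inter> D | C D. C \<in> sets F \<and> D \<in> sets G}"
  have stable: "Int_stable ?G"
  proof (rule Int_stableI)
    fix A A' assume "A \<in> ?G" "A' \<in> ?G"
    then obtain C D C' D' where "A = C \<inter> D" "A' = C' \<inter> D'"
      "C \<in> sets F" "D \<in> sets G" "C' \<in> sets F" "D' \<in> sets G" by blast
    then show "A \<inter> A' \<in> ?G" by (intro CollectI exI[of _ "C \<inter> C'"] exI[of _ "D \<inter> D'"]) auto
  qed
  have gen_M: "?G \<subseteq> sets M" using sub(1,2) by (auto simp: subalgebra_def)
  have centered: "(\<integral>\<omega>. X \<omega> \<partial>M) = 0"
  proof -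
    have "(\<integral>\<omega>. X \<omega> \<partial>M) = (\<integral>\<omega>. real_cond_exp M F X \<omega> \<partial>M)"
      using F.real_cond_exp_int(2)[OF X(1)] by simp
    also have "\<dots> = (\<integral>\<omega>. 0 \<partial>M)"
      by (rule integral_cong_AE) (use X(3) in auto)
    finally show ?thesis by simp
  qed
  have B_gen: "B \<in> sigma_sets (space M) ?G"
    using B sub(1) by (simp add: sets_join_sigma subalgebra_def)
  show ?thesis
  proof (rule integral_indicator_mult_eq_0_sigma_sets[OF stable gen_M X(1) centered _ B_gen])
    fix A assume "A \<in> ?G"
    then obtain C D where "A = C \<inter> D" "C \<in> sets F" "D \<in> sets G" by blast
    then show "(\<integral>\<omega>. indicator A \<omega> * X \<omega> \<partial>M) = 0"
      using integral_indicator_Int_mult_eq_0[OF ci sub X] by simp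
  qed
qed

lemma integral_sum_at_join_measurable_index_eq_0:
  fixes X :: "'i \<Rightarrow> 'a \<Rightarrow> real" and \<tau> :: "'a \<Rightarrow> 'i"
  assumes ci: "cond_indep M F G H"
    and sub: "subalgebra M F" "subalgebra M G" "subalgebra M H"
    and \<tau>: "\<tau> \<in> measurable (join_sigma F G) (count_space UNIV)"
    and X: "\<And>k. k \<in> K \<Longrightarrow> integrable M (X k)" "\<And>k. k \<in> K \<Longrightarrow> X k \<in> borel_measurable H"
      "\<And>k. k \<in> K \<Longrightarrow> AE \<omega> in M. real_cond_exp M F (X k) \<omega> = 0"
  shows "integrable M (\<lambda>\<omega>. \<Sum>k\<in>K. if \<tau> \<omega> = k then c k * X k \<omega> else 0)"
    and "(\<integral>\<omega>. (\<Sum>k\<in>K. if \<tau> \<omega> = k then c k * X k \<omega> else 0) \<partial>M) = 0"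
proof -
  interpret F: sigma_finite_subalgebra M F
    using sub(1) by (rule sigma_finite_subalgebra_of_subalgebra)
  have space: "space F = space M" using sub(1) by (simp add: subalgebra_def)
  have level_join: "\<tau> -` {k} \<inter> space M \<in> sets (join_sigma F G)" for k
    using measurable_sets[OF \<tau>, of "{k}"] space by simp
  then have level_M: "\<tau> -` {k} \<inter> space M \<in> sets M" for k
    using subalgebra_join_sigma[OF sub(1,2)] by (auto simp: subalgebra_def)
  have cX_centered: "AE \<omega> in M. real_cond_exp M F (\<lambda>\<omega>. c k * X k \<omega>) \<omega> = 0" if "k \<in> K" for k
    using F.real_cond_exp_cmult[OF X(1)[OF that], of "c k"] X(3)[OF that] by eventually_elim simp
  have sum_eq: "(\<Sum>k\<in>K. if \<tau> \<omega> = k then c k * X k \<omega> else 0)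
      = (\<Sum>k\<in>K. indicator (\<tau> -` {k} \<inter> space M) \<omega> * (c k * X k \<omega>))" if "\<omega> \<in> space M" for \<omega>
    using that by (intro sum.cong) auto
  have int: "integrable M (\<lambda>\<omega>. indicator (\<tau> -` {k} \<inter> space M) \<omega> * (c k * X k \<omega>))" if "k \<in> K" for k
    using integrable_mult_indicator[OF level_M integrable_mult_right[OF X(1)[OF that]]] by simp
  show "integrable M (\<lambda>\<omega>. \<Sum>k\<in>K. if \<tau> \<omega> = k then c k * X k \<omega> else 0)"
    using int by (subst Bochner_Integration.integrable_cong[OF refl sum_eq]) auto
  have "(\<integral>\<omega>. (\<Sum>k\<in>K. if \<tau> \<omega> = k then c k * X k \<omega> else 0) \<partial>M)
      = (\<Sum>k\<in>K. \<integral>\<omega>. indicator (\<tau> -` {k} \<inter> space M) \<omega> * (c k * X k \<omega>) \<partial>M)"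
    using int by (subst Bochner_Integration.integral_cong[OF refl sum_eq]) auto
  also have "\<dots> = 0"
    using integral_indicator_mult_eq_0_join_sigma[OF ci sub _ _ cX_centered level_join] X by simp
  finally show "(\<integral>\<omega>. (\<Sum>k\<in>K. if \<tau> \<omega> = k then c k * X k \<omega> else 0) \<partial>M) = 0" .
qed

end

theorem theorem1:
  fixes M :: "'w measure" and S :: "'s measure" and A :: "'b measure"
    and T t :: nat and \<gamma> :: real
    and s :: "nat \<Rightarrow> 'w \<Rightarrow> 's" and a :: "nat \<Rightarrow> 'w \<Rightarrow> 'b" and r :: "nat \<Rightarrow> 'w \<Rightarrow> real"
    and Q :: "'s \<Rightarrow> 'b \<Rightarrow> real"
    and eps :: "nat \<Rightarrow> nat \<Rightarrow> 'w \<Rightarrow> real"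
    and sel :: "(nat \<Rightarrow> real) \<Rightarrow> nat"
    and i :: nat
  assumes M: "prob_space M"
    and gamma: "0 \<le> \<gamma>" "\<gamma> < 1"
    and t: "1 \<le> t" "t \<le> T"
    and s_meas: "\<And>k. s k \<in> measurable M S"
    and a_meas: "\<And>k. a k \<in> measurable M A"
    and r_meas: "\<And>k. r k \<in> borel_measurable M"
    and Q_meas: "(\<lambda>(x, y). Q x y) \<in> borel_measurable (S \<Otimes>\<^sub>M A)"
    and eps_int: "\<And>i k. i \<in> {1, 2} \<Longrightarrow> k \<in> {1..T} \<Longrightarrow> integrable M (eps i k)"
    and eps_centered: "\<And>i k. i \<in> {1, 2} \<Longrightarrow> k \<in> {1..T} \<Longrightarrow>
        AE \<omega> in M. real_cond_exp M (traj_sigma M S A T s a r) (eps i k) \<omega> = 0"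
    and eps_indep: "cond_indep M (traj_sigma M S A T s a r)
        (noise_sigma M T (eps 1)) (noise_sigma M T (eps 2))"
    and sel_argmax: "\<And>v. (\<exists>h>0. \<forall>h'>0. v h' \<le> v h) \<Longrightarrow>
        0 < sel v \<and> (\<forall>h'>0. v h' \<le> v (sel v))"
    and sel_meas: "sel \<in> measurable (PiM UNIV (\<lambda>_. borel)) (count_space UNIV)"
    and i: "i \<in> {1, 2}"
    and R_int: "integrable M (\<lambda>\<omega>.
        let V = (\<lambda>m h. Vrec \<gamma> T (\<lambda>k. r k \<omega>) (\<lambda>k. Q (s k \<omega>) (a k \<omega>) + eps m k \<omega>) t h)
        in V (3 - i) (sel (V i)))"
    and maxQ_int: "integrable M (\<lambda>\<omega>.
        Max ((\<lambda>h. Qth \<gamma> T (\<lambda>k. r k \<omega>) (\<lambda>k. Q (s k \<omega>) (a k \<omega>)) t h) ` {0..T - t}))"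
  shows "(\<integral>\<omega>. (let V = (\<lambda>m h. Vrec \<gamma> T (\<lambda>k. r k \<omega>) (\<lambda>k. Q (s k \<omega>) (a k \<omega>) + eps m k \<omega>) t h)
                 in V (3 - i) (sel (V i))) \<partial>M)
         \<le> (\<integral>\<omega>. Max ((\<lambda>h. Qth \<gamma> T (\<lambda>k. r k \<omega>) (\<lambda>k. Q (s k \<omega>) (a k \<omega>)) t h) ` {0..T - t}) \<partial>M)"
proof -
  interpret prob_space M by (rule M)
  define F where "F = traj_sigma M S A T s a r"
  define G where "G m = noise_sigma M T (eps m)" for m
  define V where "V = (\<lambda>m \<omega>. Vrec \<gamma> T (\<lambda>k. r k \<omega>) (\<lambda>k. Q (s k \<omega>) (a k \<omega>) + eps m k \<omega>) t)"
  define j where "j = 3 - i"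
  have j: "j \<in> {1, 2}" using i by (auto simp: j_def)
  have sub_F: "subalgebra M F"
    unfolding F_def using s_meas a_meas r_meas by (rule subalgebra_traj_sigma)
  have sub_G: "subalgebra M (G m)" if "m \<in> {1, 2}" for m
    unfolding G_def using eps_int[OF that] by (intro subalgebra_noise_sigma) auto
  have ci: "cond_indep M F (G i) (G j)"
    using eps_indep i cond_indep_commute unfolding F_def G_def j_def by auto
  have "V i \<in> measurable (join_sigma F (G i)) (PiM UNIV (\<lambda>_. borel))"
    unfolding V_def F_def G_def using eps_int[OF i] t(1)
    by (intro measurable_Vrec_join_traj_noise s_meas a_meas r_meas Q_meas) auto
  then have sel_join: "(\<lambda>\<omega>. sel (V i \<omega>)) \<in> measurable (join_sigma F (G i)) (count_space UNIV)"
    using sel_meas by (rule measurable_compose)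
  define N where "N = (\<lambda>\<omega>. \<Sum>k\<in>{1..T - t}. if sel (V i \<omega>) = k then \<gamma> ^ k * eps j (t + k) \<omega> else 0)"
  have noise: "integrable M (eps j (t + k))" "eps j (t + k) \<in> borel_measurable (G j)"
    "AE \<omega> in M. real_cond_exp M F (eps j (t + k)) \<omega> = 0" if "k \<in> {1..T - t}" for k
  proof -
    have k: "t + k \<in> {1..T}" using that t by auto
    show "integrable M (eps j (t + k))" using eps_int[OF j k] .
    show "eps j (t + k) \<in> borel_measurable (G j)"
      unfolding G_def using eps_int[OF j] k by (intro measurable_noise_sigma) auto
    show "AE \<omega> in M. real_cond_exp M F (eps j (t + k)) \<omega> = 0"
      using eps_centered[OF j k] unfolding F_def .
  qed
  have N_int: "integrable M N" and N_zero: "(\<integral>\<omega>. N \<omega> \<partial>M) = 0"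
    using integral_sum_at_join_measurable_index_eq_0[where c = "\<lambda>k. \<gamma> ^ k",
        OF ci sub_F sub_G[OF i] sub_G[OF j] sel_join noise]
    by (simp_all only: N_def)
  let ?maxQ = "\<lambda>\<omega>. Max (Qth \<gamma> T (\<lambda>k. r k \<omega>) (\<lambda>k. Q (s k \<omega>) (a k \<omega>)) t ` {0..T - t})"
  have "V j \<omega> (sel (V i \<omega>)) \<le> ?maxQ \<omega> + N \<omega>" for \<omega>
    using sel_argmax[OF Vrec_has_argmax[OF t(2)]] t(2) unfolding V_def N_def
    by (intro Vrec_noisy_le_Max_Qth) auto
  then have "(\<integral>\<omega>. V j \<omega> (sel (V i \<omega>)) \<partial>M) \<le> (\<integral>\<omega>. ?maxQ \<omega> + N \<omega> \<partial>M)"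
    using R_int maxQ_int N_int unfolding V_def j_def Let_def by (intro integral_mono) auto
  also have "\<dots> = (\<integral>\<omega>. ?maxQ \<omega> \<partial>M)"
    using maxQ_int N_int N_zero by simp
  finally show ?thesis unfolding V_def j_def Let_def .
qed

end
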